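(* Let $p$ be a prime and let $P$ be a nonabelian finite $p$-group on which there exists a transitive saturated fusion system. Then $P$ is indecomposable as a direct product, i.e. $P$ is not the direct product of two nontrivial subgroups.
   Context: A saturated fusion system $\mathcal{F}$ on a finite $p$-group $P$ is called transitive if any two nontrivial elements of $P$ are $\mathcal{F}$-conjugate. *)

theory Defs
  imports "HOL-Algebra.Algebra" "HOL-Library.FuncSet" "HOL-Computational_Algebra.Primes"
begin

definition p_group :: "nat \<Rightarrow> ('a, 'b) monoid_scheme \<Rightarrow> bool" where
  "p_group p G \<longleftrightarrow> group G \<and> finite (carrier G) \<and> (\<exists>n. card (carrier G) = p ^ n)"

definition centralizer_set :: "('a, 'b) monoid_scheme \<Rightarrow> 'a set \<Rightarrow> 'a set" where
  "centralizer_set G H = {g \<in> carrier G. \<forall>x\<in>H. g \<otimes>\<^bsub>G\<^esub> x = x \<otimes>\<^bsub>G\<^esub> g}"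

definition conjmap :: "('a, 'b) monoid_scheme \<Rightarrow> 'a \<Rightarrow> 'a set \<Rightarrow> ('a \<Rightarrow> 'a)" where
  "conjmap G s P = (\<lambda>x\<in>P. s \<otimes>\<^bsub>G\<^esub> x \<otimes>\<^bsub>G\<^esub> inv\<^bsub>G\<^esub> s)"

definition HomS :: "('a, 'b) monoid_scheme \<Rightarrow> 'a set \<Rightarrow> 'a set \<Rightarrow> ('a \<Rightarrow> 'a) set" where
  "HomS G P Q = {conjmap G s P | s. s \<in> carrier G \<and>
                    (\<forall>x\<in>P. s \<otimes>\<^bsub>G\<^esub> x \<otimes>\<^bsub>G\<^esub> inv\<^bsub>G\<^esub> s \<in> Q)}"

definition InjHom :: "('a, 'b) monoid_scheme \<Rightarrow> 'a set \<Rightarrow> 'a set \<Rightarrow> ('a \<Rightarrow> 'a) set" where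
  "InjHom G P Q = {\<phi>. \<phi> \<in> hom (G\<lparr>carrier := P\<rparr>) (G\<lparr>carrier := Q\<rparr>) \<and> inj_on \<phi> P \<and> \<phi> \<in> extensional P}"

text \<open>A fusion system on the finite p-group G (= S): for every pair of subgroups
  P, Q a set F P Q of injective homomorphisms P -> Q, containing Hom_S(P,Q),
  closed under composition, and such that each morphism is the composite of an
  F-isomorphism and an inclusion (the corestriction to its image and its inverse
  are in F).\<close>

definition fusion_system :: "('a, 'b) monoid_scheme \<Rightarrow> ('a set \<Rightarrow> 'a set \<Rightarrow> ('a \<Rightarrow> 'a) set) \<Rightarrow> bool" where
  "fusion_system G F \<longleftrightarrow>
     (\<forall>P Q. \<not> (subgroup P G \<and> subgroup Q G) \<longrightarrow> F P Q = {}) \<and>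
     (\<forall>P Q. subgroup P G \<and> subgroup Q G \<longrightarrow>
         F P Q \<subseteq> InjHom G P Q \<and> HomS G P Q \<subseteq> F P Q \<and>
         (\<forall>\<phi>\<in>F P Q. \<phi> \<in> F P (\<phi> ` P) \<and> restrict (inv_into P \<phi>) (\<phi> ` P) \<in> F (\<phi> ` P) P)) \<and>
     (\<forall>P Q R \<phi> \<psi>. \<phi> \<in> F P Q \<longrightarrow> \<psi> \<in> F Q R \<longrightarrow> compose P \<psi> \<phi> \<in> F P R)"

definition F_conj_subgroups :: "('a set \<Rightarrow> 'a set \<Rightarrow> ('a \<Rightarrow> 'a) set) \<Rightarrow> 'a set \<Rightarrow> 'a set \<Rightarrow> bool" where
  "F_conj_subgroups F P Q \<longleftrightarrow> (\<exists>\<phi>\<in>F P Q. \<phi> ` P = Q)"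

definition fully_normalized :: "('a, 'b) monoid_scheme \<Rightarrow> ('a set \<Rightarrow> 'a set \<Rightarrow> ('a \<Rightarrow> 'a) set) \<Rightarrow> 'a set \<Rightarrow> bool" where
  "fully_normalized G F P \<longleftrightarrow> subgroup P G \<and>
     (\<forall>Q. F_conj_subgroups F P Q \<longrightarrow> card (normalizer G Q) \<le> card (normalizer G P))"

definition fully_centralized :: "('a, 'b) monoid_scheme \<Rightarrow> ('a set \<Rightarrow> 'a set \<Rightarrow> ('a \<Rightarrow> 'a) set) \<Rightarrow> 'a set \<Rightarrow> bool" where
  "fully_centralized G F P \<longleftrightarrow> subgroup P G \<and>
     (\<forall>Q. F_conj_subgroups F P Q \<longrightarrow> card (centralizer_set G Q) \<le> card (centralizer_set G P))"

definition N_phi :: "('a, 'b) monoid_scheme \<Rightarrow> 'a set \<Rightarrow> ('a \<Rightarrow> 'a) \<Rightarrow> 'a set" where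
  "N_phi G P \<phi> = {g \<in> normalizer G P. \<exists>h\<in>normalizer G (\<phi> ` P).
      \<forall>x\<in>P. \<phi> (g \<otimes>\<^bsub>G\<^esub> x \<otimes>\<^bsub>G\<^esub> inv\<^bsub>G\<^esub> g) = h \<otimes>\<^bsub>G\<^esub> \<phi> x \<otimes>\<^bsub>G\<^esub> inv\<^bsub>G\<^esub> h}"

text \<open>Saturation (Broto-Levi-Oliver).  Aut_S(P) = HomS G P P is a Sylow p-subgroup
  of Aut_F(P) = F P P, i.e. its order is the full p-part of the order of Aut_F(P).\<close>

definition saturated :: "nat \<Rightarrow> ('a, 'b) monoid_scheme \<Rightarrow> ('a set \<Rightarrow> 'a set \<Rightarrow> ('a \<Rightarrow> 'a) set) \<Rightarrow> bool" where
  "saturated p G F \<longleftrightarrow> fusion_system G F \<and>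
     (\<forall>P. fully_normalized G F P \<longrightarrow>
          fully_centralized G F P \<and>
          card (HomS G P P) = p ^ multiplicity p (card (F P P))) \<and>
     (\<forall>P \<phi>. subgroup P G \<longrightarrow> \<phi> \<in> F P (carrier G) \<longrightarrow> fully_centralized G F (\<phi> ` P) \<longrightarrow>
          (\<exists>\<psi>\<in>F (N_phi G P \<phi>) (carrier G). \<forall>x\<in>P. \<psi> x = \<phi> x))"

definition transitive_fusion :: "('a, 'b) monoid_scheme \<Rightarrow> ('a set \<Rightarrow> 'a set \<Rightarrow> ('a \<Rightarrow> 'a) set) \<Rightarrow> bool" where
  "transitive_fusion G F \<longleftrightarrow>
     (\<forall>x\<in>carrier G. \<forall>y\<in>carrier G. x \<noteq> \<one>\<^bsub>G\<^esub> \<longrightarrow> y \<noteq> \<one>\<^bsub>G\<^esub> \<longrightarrow>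
        (\<exists>\<phi>\<in>F (generate G {x}) (carrier G). \<phi> x = y))"

definition nontrivially_decomposable :: "('a, 'b) monoid_scheme \<Rightarrow> bool" where
  "nontrivially_decomposable G \<longleftrightarrow>
     (\<exists>H K. H \<lhd> G \<and> K \<lhd> G \<and> H \<noteq> {\<one>\<^bsub>G\<^esub>} \<and> K \<noteq> {\<one>\<^bsub>G\<^esub>} \<and>
            H \<inter> K = {\<one>\<^bsub>G\<^esub>} \<and> H <#>\<^bsub>G\<^esub> K = carrier G)"

end

theory Submission
  imports Defs
begin

(*
  Suppose G = H \<times> K with both factors nontrivial. As G is a nonabelian p-group, some commutator
  [a, b] is central and nontrivial; splitting a along the decomposition we may assume a \<in> H. Pick
  a nontrivial central w \<in> K and count the pairs (g, h) with [g, h] = z. Dividing off a K-component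
  injects the solutions for z = [a, b] w into those for z = [a, b], missing (a, b), so [a, b] w has
  strictly fewer solutions than [a, b]. On the other hand, in a saturated transitive fusion system
  any two nontrivial central elements are exchanged by an automorphism: the fusion map between the
  central cyclic subgroups they generate extends to the whole group by the extension axiom. And an
  automorphism preserves the number of solutions.
*)

section \<open>Centers, commutators and conjugacy classes\<close>

definition center :: "('a, 'b) monoid_scheme \<Rightarrow> 'a set" where
  "center G = {z \<in> carrier G. \<forall>g\<in>carrier G. g \<otimes>\<^bsub>G\<^esub> z = z \<otimes>\<^bsub>G\<^esub> g}"

definition conj_class :: "('a, 'b) monoid_scheme \<Rightarrow> 'a \<Rightarrow> 'a set" where
  "conj_class G x = {g \<otimes>\<^bsub>G\<^esub> x \<otimes>\<^bsub>G\<^esub> inv\<^bsub>G\<^esub> g | g. g \<in> carrier G}"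

definition commutator :: "('a, 'b) monoid_scheme \<Rightarrow> 'a \<Rightarrow> 'a \<Rightarrow> 'a" where
  "commutator G g h = g \<otimes>\<^bsub>G\<^esub> h \<otimes>\<^bsub>G\<^esub> inv\<^bsub>G\<^esub> g \<otimes>\<^bsub>G\<^esub> inv\<^bsub>G\<^esub> h"

definition commutator_solutions :: "('a, 'b) monoid_scheme \<Rightarrow> 'a \<Rightarrow> ('a \<times> 'a) set" where
  "commutator_solutions G z = {(g, h). g \<in> carrier G \<and> h \<in> carrier G \<and> commutator G g h = z}"

definition aut_transitive_on_center :: "('a, 'b) monoid_scheme \<Rightarrow> bool" where
  "aut_transitive_on_center G \<longleftrightarrow>
     (\<forall>z\<in>center G - {\<one>\<^bsub>G\<^esub>}. \<forall>z'\<in>center G - {\<one>\<^bsub>G\<^esub>}.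
        \<exists>\<psi>\<in>hom G G. inj_on \<psi> (carrier G) \<and> \<psi> z = z')"

context group
begin

lemma center_closed: "z \<in> center G \<Longrightarrow> z \<in> carrier G"
  unfolding center_def by blast

lemma center_commute: "z \<in> center G \<Longrightarrow> g \<in> carrier G \<Longrightarrow> g \<otimes> z = z \<otimes> g"
  unfolding center_def by blast

lemma center_conj:
  assumes z: "z \<in> center G" and g: "g \<in> carrier G"
  shows "g \<otimes> z \<otimes> inv g = z"
proof -
  have "g \<otimes> z \<otimes> inv g = z \<otimes> g \<otimes> inv g" by (simp add: center_commute[OF z g])
  also have "\<dots> = z" using z g center_closed by (simp add: m_assoc)
  finally show ?thesis .
qed

lemma one_in_center: "\<one> \<in> center G"
  unfolding center_def by simp

lemma center_subgroup: "subgroup (center G) G"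
proof (rule subgroupI)
  show "center G \<subseteq> carrier G" "center G \<noteq> {}"
    using center_closed one_in_center by blast+
next
  fix a assume a: "a \<in> center G"
  have "g \<otimes> inv a = inv a \<otimes> g" if g: "g \<in> carrier G" for g
  proof -
    have ac: "a \<in> carrier G" using a center_closed by blast
    have "g \<otimes> inv a = inv a \<otimes> (a \<otimes> g) \<otimes> inv a" using ac g by (simp add: m_assoc[symmetric])
    also have "\<dots> = inv a \<otimes> (g \<otimes> a) \<otimes> inv a" by (simp add: center_commute[OF a g])
    also have "\<dots> = inv a \<otimes> g" using ac g by (simp add: m_assoc)
    finally show ?thesis .
  qed
  then show "inv a \<in> center G"
    using a center_closed inv_closed unfolding center_def by blast
next
  fix a b assume a: "a \<in> center G" and b: "b \<in> center G"
  have "g \<otimes> (a \<otimes> b) = a \<otimes> b \<otimes> g" if g: "g \<in> carrier G" for g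
  proof -
    have ac: "a \<in> carrier G" and bc: "b \<in> carrier G" using a b center_closed by blast+
    have "g \<otimes> (a \<otimes> b) = g \<otimes> a \<otimes> b" using ac bc g by (simp add: m_assoc)
    also have "\<dots> = a \<otimes> (g \<otimes> b)" using ac bc g by (simp add: center_commute[OF a g] m_assoc)
    also have "\<dots> = a \<otimes> b \<otimes> g" using ac bc g by (simp add: center_commute[OF b g] m_assoc)
    finally show ?thesis .
  qed
  then show "a \<otimes> b \<in> center G"
    using a b center_closed m_closed unfolding center_def by blast
qed

lemma center_normal: "center G \<lhd> G"
  unfolding normal_inv_iff using center_subgroup center_conj by auto

lemma inv_mult_cancel_left [simp]:
  "x \<in> carrier G \<Longrightarrow> y \<in> carrier G \<Longrightarrow> inv x \<otimes> (x \<otimes> y) = y"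
  by (simp add: m_assoc[symmetric])

lemma mult_inv_cancel_left [simp]:
  "x \<in> carrier G \<Longrightarrow> y \<in> carrier G \<Longrightarrow> x \<otimes> (inv x \<otimes> y) = y"
  by (simp add: m_assoc[symmetric])

lemma conj_eq_self_iff:
  assumes g: "g \<in> carrier G" and x: "x \<in> carrier G"
  shows "g \<otimes> x \<otimes> inv g = x \<longleftrightarrow> g \<otimes> x = x \<otimes> g"
proof -
  have "g \<otimes> x \<otimes> inv g = x \<longleftrightarrow> g \<otimes> x \<otimes> inv g \<otimes> g = x \<otimes> g"
    using g x by simp
  also have "\<dots> \<longleftrightarrow> g \<otimes> x = x \<otimes> g" using g x by (simp add: m_assoc)
  finally show ?thesis .
qed

lemma center_if_conj_eq:
  assumes x: "x \<in> carrier G" and conj: "\<And>g. g \<in> carrier G \<Longrightarrow> g \<otimes> x \<otimes> inv g = x"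
  shows "x \<in> center G"
proof -
  have "g \<otimes> x = x \<otimes> g" if "g \<in> carrier G" for g
    using conj[OF that] conj_eq_self_iff[OF that x] by blast
  then show ?thesis using x unfolding center_def by blast
qed

lemma commutator_closed [simp]:
  "g \<in> carrier G \<Longrightarrow> h \<in> carrier G \<Longrightarrow> commutator G g h \<in> carrier G"
  unfolding commutator_def by simp

lemma commutator_eq_iff:
  assumes g: "g \<in> carrier G" and h: "h \<in> carrier G" and z: "z \<in> carrier G"
  shows "commutator G g h = z \<longleftrightarrow> g \<otimes> h \<otimes> inv g = z \<otimes> h"
proof -
  have "commutator G g h = z \<longleftrightarrow> commutator G g h \<otimes> h = z \<otimes> h"
    using g h z by simp
  also have "commutator G g h \<otimes> h = g \<otimes> h \<otimes> inv g"
    using g h unfolding commutator_def by (simp add: m_assoc)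
  finally show ?thesis .
qed

lemma commutator_eq_one_iff:
  "g \<in> carrier G \<Longrightarrow> h \<in> carrier G \<Longrightarrow> commutator G g h = \<one> \<longleftrightarrow> g \<otimes> h = h \<otimes> g"
  by (simp add: commutator_eq_iff conj_eq_self_iff)

lemma inv_commutator:
  "g \<in> carrier G \<Longrightarrow> h \<in> carrier G \<Longrightarrow> inv (commutator G g h) = commutator G h g"
  unfolding commutator_def by (simp add: inv_mult_group m_assoc)

lemma commutator_in_normal_left:
  assumes N: "N \<lhd> G" and x: "x \<in> N" and g: "g \<in> carrier G"
  shows "commutator G x g \<in> N"
proof -
  interpret normal N G by (rule N)
  have "x \<otimes> (g \<otimes> inv x \<otimes> inv g) \<in> N"
    using x inv_op_closed2[OF g] by simp
  then show ?thesis
    using x g subset unfolding commutator_def by (auto simp: m_assoc)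
qed

lemma commutator_in_normal_right:
  assumes N: "N \<lhd> G" and x: "x \<in> N" and g: "g \<in> carrier G"
  shows "commutator G g x \<in> N"
proof -
  interpret normal N G by (rule N)
  show ?thesis
    using x inv_op_closed2[OF g x] unfolding commutator_def by simp
qed

lemma conj_class_refl: "x \<in> carrier G \<Longrightarrow> x \<in> conj_class G x"
  unfolding conj_class_def by (intro CollectI exI[of _ \<one>]) simp

lemma conj_class_subset_carrier: "x \<in> carrier G \<Longrightarrow> conj_class G x \<subseteq> carrier G"
  unfolding conj_class_def by auto

lemma conj_class_eq:
  assumes x: "x \<in> carrier G" and y: "y \<in> conj_class G x"
  shows "conj_class G y = conj_class G x"
proof -
  obtain g where g: "g \<in> carrier G" and yg: "y = g \<otimes> x \<otimes> inv g"
    using y unfolding conj_class_def by blast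
  have to_x: "h \<otimes> y \<otimes> inv h = (h \<otimes> g) \<otimes> x \<otimes> inv (h \<otimes> g)" if "h \<in> carrier G" for h
    using that g x yg by (simp add: m_assoc inv_mult_group)
  have to_y: "h \<otimes> x \<otimes> inv h = (h \<otimes> inv g) \<otimes> y \<otimes> inv (h \<otimes> inv g)" if "h \<in> carrier G" for h
    using that g x yg by (simp add: m_assoc inv_mult_group)
  show ?thesis
    unfolding conj_class_def
  proof (intro equalityI subsetI)
    fix z assume "z \<in> {h \<otimes> y \<otimes> inv h |h. h \<in> carrier G}"
    then show "z \<in> {h \<otimes> x \<otimes> inv h |h. h \<in> carrier G}"
      using to_x g by blast
  next
    fix z assume "z \<in> {h \<otimes> x \<otimes> inv h |h. h \<in> carrier G}"
    then show "z \<in> {h \<otimes> y \<otimes> inv h |h. h \<in> carrier G}"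
      using to_y g by blast
  qed
qed

lemma conj_class_singleton_iff:
  assumes x: "x \<in> carrier G"
  shows "conj_class G x = {x} \<longleftrightarrow> x \<in> center G"
proof
  assume "conj_class G x = {x}"
  then have "g \<otimes> x \<otimes> inv g = x" if "g \<in> carrier G" for g
    using that unfolding conj_class_def by blast
  then show "x \<in> center G"
    by (rule center_if_conj_eq[OF x])
next
  assume z: "x \<in> center G"
  have "conj_class G x \<subseteq> {x}"
    using center_conj[OF z] unfolding conj_class_def by auto
  then show "conj_class G x = {x}"
    using conj_class_refl[OF x] by blast
qed

lemma card_conj_class_dvd_order:
  assumes x: "x \<in> carrier G"
  shows "card (conj_class G x) dvd order G"
proof -
  let ?conj = "\<lambda>g. \<lambda>h\<in>carrier G. g \<otimes> h \<otimes> inv g"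
  interpret group_action G "carrier G" ?conj by (rule action_by_conjugation)
  have "orbit G ?conj x = conj_class G x"
    unfolding orbit_def conj_class_def using x by (simp add: restrict_apply')
  then have "order G = card (conj_class G x) * card (stabilizer G ?conj x)"
    using orbit_stabilizer_theorem[OF x] by simp
  then show ?thesis by (rule dvdI)
qed

lemma conj_classes_disjoint:
  assumes "A \<subseteq> carrier G"
  shows "pairwise disjnt (conj_class G ` A)"
proof (rule pairwiseI)
  fix C D assume "C \<in> conj_class G ` A" "D \<in> conj_class G ` A" and CD: "C \<noteq> D"
  then obtain x x' where x: "x \<in> carrier G" "C = conj_class G x"
    and x': "x' \<in> carrier G" "D = conj_class G x'"
    using assms by blast
  have "C = D" if "y \<in> C" "y \<in> D" for y
  proof -
    have "C = conj_class G y" using conj_class_eq[OF x(1)] that(1) x(2) by simp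
    also have "\<dots> = D" using conj_class_eq[OF x'(1)] that(2) x'(2) by simp
    finally show ?thesis .
  qed
  then show "disjnt C D" using CD unfolding disjnt_def by blast
qed

lemma conj_class_subset_noncentral:
  assumes S: "S \<subseteq> carrier G"
    and S_conj: "\<And>g s. g \<in> carrier G \<Longrightarrow> s \<in> S \<Longrightarrow> g \<otimes> s \<otimes> inv g \<in> S"
    and x: "x \<in> S - center G"
  shows "conj_class G x \<subseteq> S - center G"
proof
  fix y assume y: "y \<in> conj_class G x"
  have xc: "x \<in> carrier G" using x S by blast
  obtain g where g: "g \<in> carrier G" and y_eq: "y = g \<otimes> x \<otimes> inv g"
    using y unfolding conj_class_def by blast
  have "y \<in> S" unfolding y_eq using S_conj[OF g] x by simp
  moreover have "y \<notin> center G"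
  proof
    assume y_center: "y \<in> center G"
    have "conj_class G x = conj_class G y" using conj_class_eq[OF xc y] by simp
    also have "\<dots> = {y}" using y_center center_closed conj_class_singleton_iff by blast
    finally have "x = y" using conj_class_refl[OF xc] by simp
    then show False using x y_center by simp
  qed
  ultimately show "y \<in> S - center G" by blast
qed

lemma commutator_in_center_if_coset_central:
  assumes a: "a \<in> carrier G" and b: "b \<in> carrier G"
    and central: "center G #> a \<in> center (G Mod center G)"
  shows "commutator G a b \<in> center G"
proof -
  let ?Z = "center G"
  interpret Z: normal ?Z G by (rule center_normal)
  have "?Z #> b \<in> carrier (G Mod ?Z)"
    using b unfolding FactGroup_def RCOSETS_def by auto
  then have "(?Z #> b) <#> (?Z #> a) = (?Z #> a) <#> (?Z #> b)"
    using group.center_commute[OF Z.factorgroup_is_group central] by (simp add: FactGroup_def)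
  then have "?Z #> (b \<otimes> a) = ?Z #> (a \<otimes> b)"
    using Z.rcos_sum a b by simp
  then have "a \<otimes> b \<in> ?Z #> (b \<otimes> a)"
    using rcos_self[OF _ center_subgroup] a b by simp
  then have "a \<otimes> b \<otimes> inv (b \<otimes> a) \<in> ?Z"
    using Z.rcos_module_imp[OF is_group] a b by simp
  moreover have "a \<otimes> b \<otimes> inv (b \<otimes> a) = commutator G a b"
    using a b unfolding commutator_def by (simp add: inv_mult_group m_assoc)
  ultimately show ?thesis by simp
qed

lemma finite_commutator_solutions:
  "finite (carrier G) \<Longrightarrow> finite (commutator_solutions G z)"
  by (rule finite_subset[of _ "carrier G \<times> carrier G"]) (auto simp: commutator_solutions_def)

lemma card_commutator_solutions_le:
  assumes fin: "finite (carrier G)" and hom: "\<psi> \<in> hom G G" and inj: "inj_on \<psi> (carrier G)"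
  shows "card (commutator_solutions G z) \<le> card (commutator_solutions G (\<psi> z))"
proof -
  interpret \<psi>: group_hom G G \<psi>
    using hom is_group by (simp add: group_hom_def group_hom_axioms_def)
  have hom_commutator: "\<psi> (commutator G g h) = commutator G (\<psi> g) (\<psi> h)"
    if "g \<in> carrier G" "h \<in> carrier G" for g h
    using that unfolding commutator_def by (simp add: \<psi>.hom_mult \<psi>.hom_inv)
  let ?f = "\<lambda>(g, h). (\<psi> g, \<psi> h)"
  have "?f ` commutator_solutions G z \<subseteq> commutator_solutions G (\<psi> z)"
    unfolding commutator_solutions_def using hom_commutator by auto
  moreover have "inj_on ?f (commutator_solutions G z)"
    using inj unfolding inj_on_def commutator_solutions_def by auto
  ultimately show ?thesis
    using card_inj_on_le finite_commutator_solutions[OF fin] by blast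
qed

lemma inj_on_shift_right:
  assumes closed: "\<And>g h. (g, h) \<in> S \<Longrightarrow> h \<in> carrier G \<and> k g \<in> carrier G"
  shows "inj_on (\<lambda>(g, h). (g, h \<otimes> inv (k g))) S"
proof (rule inj_onI)
  fix q q' assume q: "q \<in> S" and q': "q' \<in> S"
    and eq: "(\<lambda>(g, h). (g, h \<otimes> inv (k g))) q = (\<lambda>(g, h). (g, h \<otimes> inv (k g))) q'"
  obtain g h g' h' where q_eq: "q = (g, h)" and q'_eq: "q' = (g', h')" by fastforce
  have "g = g' \<and> h \<otimes> inv (k g) = h' \<otimes> inv (k g')"
    using eq unfolding q_eq q'_eq by auto
  then have g_eq: "g' = g" and "h \<otimes> inv (k g) = h' \<otimes> inv (k g)" by auto
  then have "h = h'" using closed q q' unfolding q_eq q'_eq by simp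
  then show "q = q'" using q_eq q'_eq g_eq by simp
qed

lemma commutator_mult_inv_right:
  assumes g: "g \<in> carrier G" and h: "h \<in> carrier G" and k: "k \<in> carrier G"
    and c: "c \<in> carrier G" and w: "w \<in> center G"
    and gh: "commutator G g h = c \<otimes> w" and gk: "commutator G g k = w"
  shows "commutator G g (h \<otimes> inv k) = c"
proof -
  have wc: "w \<in> carrier G" using w center_closed by blast
  have conj_h: "g \<otimes> h \<otimes> inv g = c \<otimes> w \<otimes> h" using gh commutator_eq_iff[OF g h] c wc by simp
  have conj_k: "g \<otimes> k \<otimes> inv g = w \<otimes> k" using gk commutator_eq_iff[OF g k] wc by simp
  have "g \<otimes> (h \<otimes> inv k) \<otimes> inv g = (g \<otimes> h \<otimes> inv g) \<otimes> inv (g \<otimes> k \<otimes> inv g)"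
    using g h k by (simp add: m_assoc inv_mult_group)
  also have "\<dots> = c \<otimes> (w \<otimes> (h \<otimes> inv k)) \<otimes> inv w"
    unfolding conj_h conj_k using c wc h k by (simp add: m_assoc inv_mult_group)
  also have "w \<otimes> (h \<otimes> inv k) = (h \<otimes> inv k) \<otimes> w"
    using center_commute[OF w] h k by simp
  also have "c \<otimes> (h \<otimes> inv k \<otimes> w) \<otimes> inv w = c \<otimes> (h \<otimes> inv k)"
    using c wc h k by (simp add: m_assoc)
  finally show ?thesis using commutator_eq_iff[OF g _ c] h k by simp
qed

end

section \<open>Finite p-groups\<close>

locale prime_power_group = group G for G (structure) +
  fixes p n :: nat
  assumes prime_p: "Factorial_Ring.prime p" and order_eq: "order G = p ^ n"
begin

lemma finite_carrier: "finite (carrier G)"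
proof -
  have "order G > 0" using order_eq prime_gt_0_nat[OF prime_p] by simp
  then show ?thesis unfolding order_def by (rule card_ge_0_finite)
qed

lemma prime_power_dvd_order: "d dvd order G \<Longrightarrow> \<exists>i. d = p ^ i"
  using divides_primepow_nat[OF prime_p] order_eq by auto

lemma prime_dvd_if_dvd_order:
  assumes "d dvd order G" and "d \<noteq> 1"
  shows "p dvd d"
proof -
  obtain i where i: "d = p ^ i" using prime_power_dvd_order[OF assms(1)] by blast
  then have "i \<noteq> 0" using assms(2) by auto
  then show ?thesis using i by (simp add: dvd_power)
qed

lemma prime_dvd_card_subgroup:
  assumes H: "subgroup H G" and nontriv: "H \<noteq> {\<one>}"
  shows "p dvd card H"
proof (rule prime_dvd_if_dvd_order)
  show "card H dvd order G"
    unfolding lagrange[OF H, symmetric] by simp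
  show "card H \<noteq> 1"
    using nontriv subgroup.one_closed[OF H] by (auto simp: card_1_singleton_iff)
qed

lemma prime_dvd_card_conj_class:
  assumes x: "x \<in> carrier G" "x \<notin> center G"
  shows "p dvd card (conj_class G x)"
proof (rule prime_dvd_if_dvd_order)
  show "card (conj_class G x) dvd order G" by (rule card_conj_class_dvd_order[OF x(1)])
  have "conj_class G x \<noteq> {x}"
    using x conj_class_singleton_iff by blast
  then show "card (conj_class G x) \<noteq> 1"
    using conj_class_refl[OF x(1)] by (auto simp: card_1_singleton_iff)
qed

lemma prime_dvd_card_noncentral:
  assumes S: "S \<subseteq> carrier G"
    and S_conj: "\<And>g s. g \<in> carrier G \<Longrightarrow> s \<in> S \<Longrightarrow> g \<otimes> s \<otimes> inv g \<in> S"
  shows "p dvd card (S - center G)"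
proof -
  let ?classes = "conj_class G ` (S - center G)"
  have union: "S - center G = \<Union>?classes"
  proof
    show "S - center G \<subseteq> \<Union>?classes"
    proof
      fix x assume x: "x \<in> S - center G"
      then have "x \<in> conj_class G x" using S conj_class_refl by blast
      then show "x \<in> \<Union>?classes" using x by blast
    qed
    show "\<Union>?classes \<subseteq> S - center G"
      using conj_class_subset_noncentral[OF S S_conj] by blast
  qed
  have finite_classes: "finite C" if C: "C \<in> ?classes" for C
  proof -
    obtain x where "x \<in> S - center G" "C = conj_class G x" using C by blast
    then have "C \<subseteq> carrier G" using S conj_class_subset_carrier by blast
    then show ?thesis by (rule finite_subset[OF _ finite_carrier])
  qed
  have disjoint: "pairwise disjnt ?classes"
    by (rule conj_classes_disjoint) (use S in blast)
  have "card (S - center G) = card (\<Union>?classes)"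
    by (rule arg_cong[OF union])
  also have "\<dots> = sum card ?classes"
    by (rule card_Union_disjoint[OF disjoint finite_classes])
  also have "p dvd \<dots>"
  proof (rule dvd_sum)
    fix C assume "C \<in> ?classes"
    then obtain x where x: "x \<in> S - center G" and C: "C = conj_class G x" by blast
    have "x \<in> carrier G" using x S by blast
    then show "p dvd card C" using prime_dvd_card_conj_class x C by blast
  qed
  finally show ?thesis .
qed

lemma normal_subgroup_meets_center:
  assumes N: "N \<lhd> G" and nontriv: "N \<noteq> {\<one>}"
  shows "\<exists>z\<in>N \<inter> center G. z \<noteq> \<one>"
proof -
  interpret normal N G by (rule N)
  have fin: "finite N" by (rule finite_subset[OF subset finite_carrier])
  have "card N = card (N \<inter> center G) + card (N - center G)"
    by (rule card_Int_Diff[OF fin])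
  moreover have "p dvd card N"
    by (rule prime_dvd_card_subgroup[OF normal_imp_subgroup[OF N] nontriv])
  moreover have "p dvd card (N - center G)"
    by (rule prime_dvd_card_noncentral[OF subset inv_op_closed2])
  ultimately have p_dvd: "p dvd card (N \<inter> center G)"
    by (simp add: dvd_add_left_iff)
  have "\<one> \<in> N \<inter> center G"
    using one_in_center subgroup.one_closed[OF normal_imp_subgroup[OF N]] by blast
  then have "N \<inter> center G \<noteq> {}" by blast
  moreover have "finite (N \<inter> center G)" using fin by simp
  ultimately have "card (N \<inter> center G) > 0" by (simp add: card_gt_0_iff)
  then have "p \<le> card (N \<inter> center G)"
    using p_dvd by (simp add: dvd_imp_le)
  then have two_le: "2 \<le> card (N \<inter> center G)"
    using prime_ge_2_nat[OF prime_p] by linarith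
  show ?thesis
  proof (rule ccontr)
    assume "\<not> ?thesis"
    then have "N \<inter> center G \<subseteq> {\<one>}" by blast
    then have "card (N \<inter> center G) \<le> card {\<one>}" by (rule card_mono[rotated]) simp
    with two_le show False by simp
  qed
qed

lemma quotient_prime_power_group:
  assumes N: "N \<lhd> G"
  shows "\<exists>k. prime_power_group (G Mod N) p k"
proof -
  have "order (G Mod N) * card N = order G"
    using lagrange[OF normal_imp_subgroup[OF N]] by (simp add: FactGroup_def order_def)
  then obtain k where "order (G Mod N) = p ^ k"
    using prime_power_dvd_order by (metis dvd_triv_left)
  then show ?thesis
    using normal.factorgroup_is_group[OF N] prime_p
    by (auto simp: prime_power_group_def prime_power_group_axioms_def)
qed

lemma nonabelian_central_commutator:
  assumes nonabelian: "\<exists>x\<in>carrier G. \<exists>y\<in>carrier G. x \<otimes> y \<noteq> y \<otimes> x"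
  shows "\<exists>x\<in>carrier G. \<exists>y\<in>carrier G. commutator G x y \<in> center G - {\<one>}"
proof -
  let ?Z = "center G"
  interpret Z: normal ?Z G by (rule center_normal)
  obtain k where "prime_power_group (G Mod ?Z) p k"
    using quotient_prime_power_group[OF center_normal] by blast
  then interpret Q: prime_power_group "G Mod ?Z" p k .
  have "?Z \<noteq> carrier G"
    using nonabelian unfolding center_def by auto
  then have "carrier (G Mod ?Z) \<noteq> {\<one>\<^bsub>G Mod ?Z\<^esub>}"
    using Z.fact_group_trivial_iff finite_carrier by blast
  then obtain A where A: "A \<in> center (G Mod ?Z)" "A \<noteq> \<one>\<^bsub>G Mod ?Z\<^esub>"
    using Q.normal_subgroup_meets_center[OF Q.normal_self] by blast
  obtain a where a: "a \<in> carrier G" "A = ?Z #> a"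
    using A Q.center_closed unfolding FactGroup_def RCOSETS_def by auto
  have "a \<notin> ?Z"
    using a A Z.rcos_const is_group by (auto simp: FactGroup_def)
  then obtain b where b: "b \<in> carrier G" "b \<otimes> a \<noteq> a \<otimes> b"
    using a unfolding center_def by auto
  have "commutator G a b \<in> ?Z"
    using commutator_in_center_if_coset_central[OF a(1) b(1)] A a by simp
  moreover have "commutator G a b \<noteq> \<one>"
    using a b commutator_eq_one_iff by auto
  ultimately show ?thesis using a b by blast
qed

end

section \<open>Internal direct products\<close>

locale direct_decomposition = group G for G (structure) +
  fixes H K
  assumes normal_H: "H \<lhd> G" and normal_K: "K \<lhd> G"
    and inter_trivial: "H \<inter> K = {\<one>}" and product: "H <#> K = carrier G"
begin

sublocale H: normal H G by (rule normal_H)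
sublocale K: normal K G by (rule normal_K)

lemma commute:
  assumes x: "x \<in> H" and y: "y \<in> K"
  shows "x \<otimes> y = y \<otimes> x"
proof -
  have xc: "x \<in> carrier G" and yc: "y \<in> carrier G" using x y H.subset K.subset by auto
  have "commutator G x y \<in> H" by (rule commutator_in_normal_left[OF normal_H x yc])
  moreover have "commutator G x y \<in> K" by (rule commutator_in_normal_right[OF normal_K y xc])
  ultimately have "commutator G x y = \<one>" using inter_trivial by blast
  then show ?thesis using commutator_eq_one_iff[OF xc yc] by simp
qed

lemma commutator_factors_trivial: "x \<in> H \<Longrightarrow> y \<in> K \<Longrightarrow> commutator G x y = \<one>"
  using commute commutator_eq_one_iff H.subset K.subset by blast

lemma decompose: "g \<in> carrier G \<Longrightarrow> \<exists>x\<in>H. \<exists>y\<in>K. g = x \<otimes> y"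
  using product unfolding set_mult_def by blast

lemma decomposition_unique:
  assumes x: "x \<in> H" "x' \<in> H" and y: "y \<in> K" "y' \<in> K" and eq: "x \<otimes> y = x' \<otimes> y'"
  shows "x = x' \<and> y = y'"
proof -
  have xc: "x \<in> carrier G" "x' \<in> carrier G" using x H.subset by auto
  have yc: "y \<in> carrier G" "y' \<in> carrier G" using y K.subset by auto
  have "inv x' \<otimes> (x \<otimes> y) \<otimes> inv y = inv x' \<otimes> (x' \<otimes> y') \<otimes> inv y" using eq by simp
  then have e: "inv x' \<otimes> x = y' \<otimes> inv y" using xc yc by (simp add: m_assoc)
  have "inv x' \<otimes> x \<in> H" "y' \<otimes> inv y \<in> K" using x y by simp_all
  then have x1: "inv x' \<otimes> x = \<one>" and y1: "y' \<otimes> inv y = \<one>" using e inter_trivial by auto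
  have "x = x' \<otimes> (inv x' \<otimes> x)" using xc by simp
  also have "\<dots> = x'" using x1 xc by simp
  finally have "x = x'" .
  moreover have "y' = y' \<otimes> inv y \<otimes> y" using yc by (simp add: m_assoc)
  then have "y' = y" using y1 yc by simp
  ultimately show ?thesis by simp
qed

lemma mult_eq_one_imp: "x \<in> H \<Longrightarrow> y \<in> K \<Longrightarrow> x \<otimes> y = \<one> \<Longrightarrow> x = \<one> \<and> y = \<one>"
  using decomposition_unique[of x \<one> y \<one>] by simp

lemma swap: "direct_decomposition G K H"
proof
  show "K \<inter> H = {\<one>}" using inter_trivial by blast
  have "K <#> H = H <#> K"
  proof (intro equalityI subsetI)
    fix z assume "z \<in> K <#> H"
    then obtain k h where kh: "k \<in> K" "h \<in> H" and "z = k \<otimes> h" unfolding set_mult_def by blast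
    then have "z = h \<otimes> k" using commute[OF kh(2,1)] by simp
    then show "z \<in> H <#> K" using kh unfolding set_mult_def by blast
  next
    fix z assume "z \<in> H <#> K"
    then obtain h k where hk: "h \<in> H" "k \<in> K" and "z = h \<otimes> k" unfolding set_mult_def by blast
    then have "z = k \<otimes> h" using commute[OF hk] by simp
    then show "z \<in> K <#> H" using hk unfolding set_mult_def by blast
  qed
  then show "K <#> H = carrier G" using product by simp
qed

lemma commutator_mult_right:
  assumes g: "g \<in> carrier G" and h1: "h1 \<in> H" and h2: "h2 \<in> K"
  shows "commutator G g (h1 \<otimes> h2) = commutator G g h1 \<otimes> commutator G g h2"
proof -
  have h1c: "h1 \<in> carrier G" and h2c: "h2 \<in> carrier G" using h1 h2 H.subset K.subset by auto
  have "inv h1 \<otimes> commutator G g h2 = commutator G g h2 \<otimes> inv h1"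
    using commute[OF _ commutator_in_normal_right[OF normal_K h2 g]] h1 by simp
  then have "commutator G g h1 \<otimes> commutator G g h2
      = (g \<otimes> h1 \<otimes> inv g) \<otimes> (commutator G g h2 \<otimes> inv h1)"
    using g h1c h2c unfolding commutator_def by (simp add: m_assoc)
  also have "\<dots> = commutator G g (h1 \<otimes> h2)"
    using g h1c h2c unfolding commutator_def by (simp add: m_assoc inv_mult_group)
  finally show ?thesis by simp
qed

lemma commutator_mult_left:
  assumes g: "g \<in> carrier G" and h1: "h1 \<in> H" and h2: "h2 \<in> K"
  shows "commutator G (h1 \<otimes> h2) g = commutator G h1 g \<otimes> commutator G h2 g"
proof -
  have h1c: "h1 \<in> carrier G" and h2c: "h2 \<in> carrier G" using h1 h2 H.subset K.subset by auto
  have "commutator G (h1 \<otimes> h2) g = inv (commutator G g (h1 \<otimes> h2))"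
    using g h1c h2c by (simp add: inv_commutator)
  also have "\<dots> = inv (commutator G g h1 \<otimes> commutator G g h2)"
    by (simp add: commutator_mult_right[OF g h1 h2])
  also have "\<dots> = commutator G h2 g \<otimes> commutator G h1 g"
    using g h1c h2c by (simp add: inv_mult_group inv_commutator)
  also have "\<dots> = commutator G h1 g \<otimes> commutator G h2 g"
    using commute[OF commutator_in_normal_left[OF normal_H h1 g] commutator_in_normal_left[OF normal_K h2 g]]
    by simp
  finally show ?thesis .
qed

lemma center_component:
  assumes x: "x \<in> H" and y: "y \<in> K" and xy: "x \<otimes> y \<in> center G"
  shows "x \<in> center G"
proof -
  have xc: "x \<in> carrier G" and yc: "y \<in> carrier G" using x y H.subset K.subset by auto
  have "g \<otimes> x \<otimes> inv g = x" if g: "g \<in> carrier G" for g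
  proof -
    have "(g \<otimes> x \<otimes> inv g) \<otimes> (g \<otimes> y \<otimes> inv g) = g \<otimes> (x \<otimes> y) \<otimes> inv g"
      using g xc yc by (simp add: m_assoc)
    also have "\<dots> = x \<otimes> y" using center_conj[OF xy g] .
    finally show ?thesis
      using decomposition_unique[OF H.inv_op_closed2[OF g x] x K.inv_op_closed2[OF g y] y] by blast
  qed
  then show ?thesis by (rule center_if_conj_eq[OF xc])
qed

lemma central_commutator_component:
  assumes x: "x \<in> carrier G" and y: "y \<in> carrier G"
    and central: "commutator G x y \<in> center G - {\<one>}"
  shows "(\<exists>a\<in>H. commutator G a y \<in> center G - {\<one>}) \<or> (\<exists>a\<in>K. commutator G a y \<in> center G - {\<one>})"
proof -
  obtain a1 a2 where a1: "a1 \<in> H" and a2: "a2 \<in> K" and x_eq: "x = a1 \<otimes> a2"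
    using decompose[OF x] by blast
  have split: "commutator G x y = commutator G a1 y \<otimes> commutator G a2 y"
    using commutator_mult_left[OF y a1 a2] x_eq by simp
  have in_H: "commutator G a1 y \<in> H" and in_K: "commutator G a2 y \<in> K"
    using commutator_in_normal_left normal_H normal_K a1 a2 y by auto
  have "commutator G a1 y \<in> center G"
    using center_component[OF in_H in_K] split central by simp
  moreover have "commutator G a2 y \<in> center G"
    using direct_decomposition.center_component[OF swap in_K in_H] split central commute[OF in_H in_K]
    by simp
  moreover have "commutator G a1 y \<noteq> \<one> \<or> commutator G a2 y \<noteq> \<one>"
    using split central by auto
  ultimately show ?thesis using a1 a2 by blast
qed

lemma commutator_component:
  assumes g: "g \<in> carrier G" and h: "h \<in> carrier G" and c: "c \<in> H" and w: "w \<in> K"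
    and gh: "commutator G g h = c \<otimes> w"
  shows "\<exists>k\<in>K. commutator G g k = w"
proof -
  obtain h1 h2 where h1: "h1 \<in> H" and h2: "h2 \<in> K" and "h = h1 \<otimes> h2"
    using decompose[OF h] by blast
  then have "commutator G g h1 \<otimes> commutator G g h2 = c \<otimes> w"
    using gh commutator_mult_right[OF g h1 h2] by simp
  then have "commutator G g h2 = w"
    using decomposition_unique[OF commutator_in_normal_right[OF normal_H h1 g] c
        commutator_in_normal_right[OF normal_K h2 g] w]
    by simp
  then show ?thesis using h2 by blast
qed

lemma card_commutator_solutions_less:
  assumes fin: "finite (carrier G)" and a: "a \<in> H" and b: "b \<in> carrier G"
    and w: "w \<in> K \<inter> center G" "w \<noteq> \<one>"
  shows "card (commutator_solutions G (commutator G a b \<otimes> w))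
    < card (commutator_solutions G (commutator G a b))"
proof -
  let ?c = "commutator G a b"
  have ac: "a \<in> carrier G" using a H.subset by blast
  have c_H: "?c \<in> H" by (rule commutator_in_normal_left[OF normal_H a b])
  have w_K: "w \<in> K" and w_center: "w \<in> center G" using w by auto
  have exists: "\<exists>k\<in>K. commutator G g k = w"
    if "(g, h) \<in> commutator_solutions G (?c \<otimes> w)" for g h
    using that commutator_component[OF _ _ c_H w_K] unfolding commutator_solutions_def by blast
  \<comment> \<open>the correction depends on g alone, which makes the shift below injective\<close>
  define kk where "kk g = (SOME k. k \<in> K \<and> commutator G g k = w)" for g
  have kk: "kk g \<in> K \<and> commutator G g (kk g) = w"
    if "(g, h) \<in> commutator_solutions G (?c \<otimes> w)" for g h
  proof -
    have "\<exists>k. k \<in> K \<and> commutator G g k = w" using exists[OF that] by blast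
    then show ?thesis unfolding kk_def by (rule someI_ex)
  qed
  let ?f = "\<lambda>(g, h). (g, h \<otimes> inv (kk g))"
  have into: "?f ` commutator_solutions G (?c \<otimes> w) \<subseteq> commutator_solutions G ?c"
  proof clarify
    fix g h assume gh: "(g, h) \<in> commutator_solutions G (?c \<otimes> w)"
    then have g: "g \<in> carrier G" and hc: "h \<in> carrier G" and eq: "commutator G g h = ?c \<otimes> w"
      unfolding commutator_solutions_def by auto
    have kc: "kk g \<in> carrier G" using kk[OF gh] K.subset by blast
    have "commutator G g (h \<otimes> inv (kk g)) = ?c"
      using commutator_mult_inv_right[OF g hc kc _ w_center eq] kk[OF gh] ac b by simp
    then show "(g, h \<otimes> inv (kk g)) \<in> commutator_solutions G ?c"
      unfolding commutator_solutions_def using g hc kc by simp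
  qed
  have inj: "inj_on ?f (commutator_solutions G (?c \<otimes> w))"
  proof (rule inj_on_shift_right)
    fix g h assume gh: "(g, h) \<in> commutator_solutions G (?c \<otimes> w)"
    then show "h \<in> carrier G \<and> kk g \<in> carrier G"
      using kk[OF gh] K.subset unfolding commutator_solutions_def by blast
  qed
  have missed: "(a, b) \<notin> ?f ` commutator_solutions G (?c \<otimes> w)"
  proof
    assume "(a, b) \<in> ?f ` commutator_solutions G (?c \<otimes> w)"
    then obtain q where q: "q \<in> commutator_solutions G (?c \<otimes> w)" and ab: "(a, b) = ?f q"
      by blast
    obtain g h where q_eq: "q = (g, h)" by (cases q)
    have "(a, h) \<in> commutator_solutions G (?c \<otimes> w)" using q ab unfolding q_eq by simp
    then have k: "kk a \<in> K" "commutator G a (kk a) = w" using kk by blast+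
    then show False using commutator_factors_trivial[OF a k(1)] w by simp
  qed
  have "(a, b) \<in> commutator_solutions G ?c"
    unfolding commutator_solutions_def using ac b by simp
  then have "?f ` commutator_solutions G (?c \<otimes> w) \<subset> commutator_solutions G ?c"
    using into missed by blast
  then have "card (?f ` commutator_solutions G (?c \<otimes> w)) < card (commutator_solutions G ?c)"
    by (rule psubset_card_mono[OF finite_commutator_solutions[OF fin]])
  then show ?thesis using card_image[OF inj] by simp
qed

lemma factor_commutator_not_central:
  assumes fin: "finite (carrier G)" and aut: "aut_transitive_on_center G"
    and w: "w \<in> K \<inter> center G" "w \<noteq> \<one>" and a: "a \<in> H" and b: "b \<in> carrier G"
  shows "commutator G a b \<notin> center G - {\<one>}"
proof
  let ?c = "commutator G a b"
  assume c: "?c \<in> center G - {\<one>}"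
  have "?c \<otimes> w \<in> center G"
    using c w subgroup.m_closed[OF center_subgroup] by blast
  moreover have "?c \<otimes> w \<noteq> \<one>"
    using mult_eq_one_imp[OF commutator_in_normal_left[OF normal_H a b]] w c by blast
  ultimately obtain \<psi> where \<psi>: "\<psi> \<in> hom G G" "inj_on \<psi> (carrier G)" "\<psi> ?c = ?c \<otimes> w"
    using aut c unfolding aut_transitive_on_center_def by blast
  have "card (commutator_solutions G ?c) \<le> card (commutator_solutions G (?c \<otimes> w))"
    using card_commutator_solutions_le[OF fin \<psi>(1,2), of ?c] \<psi>(3) by simp
  then show False
    using card_commutator_solutions_less[OF fin a b w] by simp
qed

end

context prime_power_group
begin

theorem indecomposable_if_aut_transitive_on_center:
  assumes nonabelian: "\<exists>x\<in>carrier G. \<exists>y\<in>carrier G. x \<otimes> y \<noteq> y \<otimes> x"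
    and aut: "aut_transitive_on_center G"
  shows "\<not> nontrivially_decomposable G"
proof
  assume "nontrivially_decomposable G"
  then obtain H K where H: "H \<lhd> G" and K: "K \<lhd> G" and "H \<inter> K = {\<one>}" "H <#> K = carrier G"
    and nontriv: "H \<noteq> {\<one>}" "K \<noteq> {\<one>}"
    unfolding nontrivially_decomposable_def by blast
  then interpret D: direct_decomposition G H K
    by (simp add: direct_decomposition_def direct_decomposition_axioms_def is_group)
  obtain x y where x: "x \<in> carrier G" and y: "y \<in> carrier G"
    and c: "commutator G x y \<in> center G - {\<one>}"
    using nonabelian_central_commutator[OF nonabelian] by blast
  obtain w_H where w_H: "w_H \<in> H \<inter> center G" "w_H \<noteq> \<one>"
    using normal_subgroup_meets_center[OF H nontriv(1)] by blast
  obtain w_K where w_K: "w_K \<in> K \<inter> center G" "w_K \<noteq> \<one>"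
    using normal_subgroup_meets_center[OF K nontriv(2)] by blast
  from D.central_commutator_component[OF x y c] show False
  proof (elim disjE bexE)
    fix a assume "a \<in> H" "commutator G a y \<in> center G - {\<one>}"
    then show False using D.factor_commutator_not_central[OF finite_carrier aut w_K _ y] by blast
  next
    fix a assume "a \<in> K" "commutator G a y \<in> center G - {\<one>}"
    then show False
      using direct_decomposition.factor_commutator_not_central[OF D.swap finite_carrier aut w_H _ y]
      by blast
  qed
qed

end

section \<open>Saturated transitive fusion systems\<close>

context group
begin

lemma normalizer_central:
  assumes S: "S \<subseteq> center G"
  shows "normalizer G S = carrier G"
proof -
  have "g <# S #> inv g = S" if g: "g \<in> carrier G" for g
  proof -
    have "g <# S #> inv g = (\<lambda>x. g \<otimes> x \<otimes> inv g) ` S"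
      unfolding l_coset_def r_coset_def by auto
    also have "\<dots> = (\<lambda>x. x) ` S"
      by (rule image_cong[OF refl]) (use S center_conj[OF _ g] in blast)
    finally show ?thesis by simp
  qed
  moreover have "S \<subseteq> carrier G" using S center_closed by blast
  ultimately show ?thesis unfolding normalizer_def stabilizer_def by auto
qed

lemma N_phi_central:
  assumes P: "P \<subseteq> center G" and \<phi>P: "\<phi> ` P \<subseteq> center G"
  shows "N_phi G P \<phi> = carrier G"
proof -
  have "\<forall>x\<in>P. \<phi> (g \<otimes> x \<otimes> inv g) = \<one> \<otimes> \<phi> x \<otimes> inv \<one>" if g: "g \<in> carrier G" for g
  proof
    fix x assume x: "x \<in> P"
    have "g \<otimes> x \<otimes> inv g = x" using center_conj[OF _ g] x P by blast
    moreover have "\<phi> x \<in> carrier G" using x \<phi>P center_closed by blast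
    ultimately show "\<phi> (g \<otimes> x \<otimes> inv g) = \<one> \<otimes> \<phi> x \<otimes> inv \<one>" by simp
  qed
  then show ?thesis
    unfolding N_phi_def normalizer_central[OF P] normalizer_central[OF \<phi>P] using one_closed by blast
qed

lemma fully_centralized_if_central:
  assumes fin: "finite (carrier G)" and Q: "subgroup Q G" "Q \<subseteq> center G"
  shows "fully_centralized G F Q"
proof -
  have centralizer: "centralizer_set G Q = carrier G"
    using Q(2) center_commute unfolding centralizer_set_def by blast
  show ?thesis
    unfolding fully_centralized_def
  proof (intro conjI allI impI Q(1))
    fix R
    have "centralizer_set G R \<subseteq> carrier G" unfolding centralizer_set_def by blast
    then show "card (centralizer_set G R) \<le> card (centralizer_set G Q)"
      unfolding centralizer by (rule card_mono[OF fin])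
  qed
qed

lemma hom_image_generate_subset:
  assumes hom: "\<phi> \<in> hom (G\<lparr>carrier := generate G A\<rparr>) G" and A: "A \<subseteq> carrier G"
    and Z: "subgroup Z G" "\<phi> ` A \<subseteq> Z"
  shows "\<phi> ` generate G A \<subseteq> Z"
proof -
  have sub: "subgroup (generate G A) G" by (rule generate_is_subgroup[OF A])
  interpret \<phi>: group_hom "G\<lparr>carrier := generate G A\<rparr>" G \<phi>
    by (intro group_hom.intro group_hom_axioms.intro subgroup_imp_group[OF sub] is_group hom)
  have A_gen: "A \<subseteq> generate G A" by (rule subsetI, rule generate.incl)
  have "\<phi> ` generate G A = \<phi> ` generate (G\<lparr>carrier := generate G A\<rparr>) A"
    by (simp only: generate_consistent[OF A_gen sub])
  also have "\<dots> = generate G (\<phi> ` A)"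
    by (rule \<phi>.generate_img[symmetric]) (simp add: A_gen)
  also have "\<dots> \<subseteq> Z" by (rule generate_subgroup_incl[OF Z(2,1)])
  finally show ?thesis .
qed

end

lemma fusion_system_morphism:
  assumes F: "fusion_system G F" and \<phi>: "\<phi> \<in> F P Q"
  shows "subgroup P G" "subgroup Q G" "subgroup (\<phi> ` P) G"
    and "\<phi> \<in> hom (G\<lparr>carrier := P\<rparr>) (G\<lparr>carrier := Q\<rparr>)" "inj_on \<phi> P"
proof -
  have subgroups: "subgroup P' G \<and> subgroup Q' G" if "\<psi> \<in> F P' Q'" for \<psi> P' Q'
  proof (rule ccontr)
    assume "\<not> (subgroup P' G \<and> subgroup Q' G)"
    then have "F P' Q' = {}" using conjunct1[OF F[unfolded fusion_system_def]] by blast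
    then show False using that by blast
  qed
  show P: "subgroup P G" and Q: "subgroup Q G" using subgroups[OF \<phi>] by simp_all
  have "F P Q \<subseteq> InjHom G P Q \<and> (\<forall>\<psi>\<in>F P Q. \<psi> \<in> F P (\<psi> ` P))"
    using conjunct1[OF conjunct2[OF F[unfolded fusion_system_def]]] P Q by blast
  then have inj_hom: "\<phi> \<in> InjHom G P Q" and "\<phi> \<in> F P (\<phi> ` P)" using \<phi> by blast+
  then show "subgroup (\<phi> ` P) G" using subgroups by blast
  show "\<phi> \<in> hom (G\<lparr>carrier := P\<rparr>) (G\<lparr>carrier := Q\<rparr>)" "inj_on \<phi> P"
    using inj_hom unfolding InjHom_def by simp_all
qed

lemma saturated_extension:
  assumes "saturated p G F" and "subgroup P G" and "\<phi> \<in> F P (carrier G)"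
    and "fully_centralized G F (\<phi> ` P)"
  shows "\<exists>\<psi>\<in>F (N_phi G P \<phi>) (carrier G). \<forall>x\<in>P. \<psi> x = \<phi> x"
  using conjunct2[OF conjunct2[OF assms(1)[unfolded saturated_def]]] assms(2-4) by blast

lemma (in group) saturated_transitive_imp_aut_transitive_on_center:
  assumes fin: "finite (carrier G)" and sat: "saturated p G F" and trans: "transitive_fusion G F"
  shows "aut_transitive_on_center G"
  unfolding aut_transitive_on_center_def
proof (intro ballI)
  fix z z' assume z: "z \<in> center G - {\<one>}" and z': "z' \<in> center G - {\<one>}"
  have F: "fusion_system G F" using sat unfolding saturated_def by (rule conjunct1)
  have zc: "z \<in> carrier G" and z'c: "z' \<in> carrier G" using z z' center_closed by auto
  define P where "P = generate G {z}"
  have P: "subgroup P G" "P \<subseteq> center G"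
    unfolding P_def
    using generate_is_subgroup[of "{z}"] generate_subgroup_incl[OF _ center_subgroup, of "{z}"] zc z
    by simp_all
  obtain \<phi> where \<phi>: "\<phi> \<in> F P (carrier G)" and \<phi>z: "\<phi> z = z'"
    using trans zc z'c z z' unfolding transitive_fusion_def P_def by blast
  have \<phi>_hom: "\<phi> \<in> hom (G\<lparr>carrier := P\<rparr>) G"
    using fusion_system_morphism(4)[OF F \<phi>] by simp
  have \<phi>P: "\<phi> ` P \<subseteq> center G"
    using hom_image_generate_subset[OF \<phi>_hom[unfolded P_def]] zc \<phi>z z' center_subgroup
    unfolding P_def by auto
  have "fully_centralized G F (\<phi> ` P)"
    using fully_centralized_if_central[OF fin fusion_system_morphism(3)[OF F \<phi>] \<phi>P] .
  then obtain \<psi> where \<psi>: "\<psi> \<in> F (N_phi G P \<phi>) (carrier G)" and \<psi>\<phi>: "\<forall>x\<in>P. \<psi> x = \<phi> x"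
    using saturated_extension[OF sat P(1) \<phi>] by blast
  \<comment> \<open>conjugation is trivial on central subgroups, so N_phi is the whole group\<close>
  have \<psi>F: "\<psi> \<in> F (carrier G) (carrier G)"
    using \<psi> N_phi_central[OF P(2) \<phi>P] by simp
  have "z \<in> P" unfolding P_def by (rule generate.incl) simp
  then have "\<psi> z = z'" using \<psi>\<phi> \<phi>z by simp
  moreover have "\<psi> \<in> hom G G" "inj_on \<psi> (carrier G)"
    using fusion_system_morphism(4,5)[OF F \<psi>F] by simp_all
  ultimately show "\<exists>\<psi>\<in>hom G G. inj_on \<psi> (carrier G) \<and> \<psi> z = z'" by blast
qed

theorem proposition2p2:
  fixes G :: "('a, 'b) monoid_scheme" and p :: nat
    and F :: "'a set \<Rightarrow> 'a set \<Rightarrow> ('a \<Rightarrow> 'a) set"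
  assumes "Factorial_Ring.prime p"
    and "p_group p G"
    and "\<exists>x\<in>carrier G. \<exists>y\<in>carrier G. x \<otimes>\<^bsub>G\<^esub> y \<noteq> y \<otimes>\<^bsub>G\<^esub> x"
    and "saturated p G F"
    and "transitive_fusion G F"
  shows "\<not> nontrivially_decomposable G"
proof -
  obtain n where G: "group G" and order: "order G = p ^ n"
    using assms(2) unfolding p_group_def order_def by blast
  interpret prime_power_group G p n
    using G assms(1) order by (simp add: prime_power_group_def prime_power_group_axioms_def)
  show ?thesis
    using indecomposable_if_aut_transitive_on_center[OF assms(3)]
      saturated_transitive_imp_aut_transitive_on_center[OF finite_carrier assms(4,5)]
    by blast
qed

end
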